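(* Let $d_1,d_2\ge1$ be integers, not both equal to $1$, and $s_1,s_2$ real numbers, and define $$h_a(x_1,x_2)=\int_{-1}^1(1+x_1z)^{d_1}(1+x_2z)^{d_2}\big(x_a(x_as_a-1)(1-z^2)+z(1-x_a^2)\big)\,dz,\qquad a=1,2.$$ If $s_1<1$ and $s_2<1$, then there exist $x_1,x_2\in(0,1)$ with $h_1(x_1,x_2)=0=h_2(x_1,x_2)$. *)

theory Defs
  imports "HOL-Analysis.Analysis"
begin

definition h_fun :: "nat \<Rightarrow> nat \<Rightarrow> real \<Rightarrow> real \<Rightarrow> real \<Rightarrow> real \<Rightarrow> real" where
  "h_fun d1 d2 xa sa x1 x2 =
     integral {-1..1} (\<lambda>z. (1 + x1 * z) ^ d1 * (1 + x2 * z) ^ d2 *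
        (xa * (xa * sa - 1) * (1 - z^2) + z * (1 - xa^2)))"

end

theory Submission
  imports Defs
begin

(* Integrating the term z (1 - x_a^2) by parts against (1 - z^2) writes h_a as the integral of
   (1 - z^2) (1 + x1 z)^(d1-1) (1 + x2 z)^(d2-1) times a factor which, on the edge x_a = e of the
   square [e,1]^2, is nonnegative as soon as d1 + d2 >= 3 and e (3 - 2 s_a) <= 1.  On the edge
   x_a = 1 the integrand is (s_a - 1)(1 - z^2) times a positive weight, so h_a < 0 there.  A common
   zero then exists by the Poincare-Miranda theorem, which follows from Brouwer's fixed point
   theorem applied to the clamped map p + (h_1 p, h_2 p). *)

lemma clamp_fixed_point_eq_zero:
  fixes a b x t :: real
  assumes "a \<le> x" "x \<le> b" "max a (min b (x + t)) = x"
    and "x = a \<Longrightarrow> 0 \<le> t" "x = b \<Longrightarrow> t \<le> 0"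
  shows "t = 0"
  using assms by (cases "x = a"; cases "x = b") (auto simp: max_def min_def split: if_splits)

lemma poincare_miranda_2:
  fixes f g :: "real \<times> real \<Rightarrow> real"
  assumes "a \<le> b" "c \<le> d"
    and contf: "continuous_on ({a..b} \<times> {c..d}) f"
    and contg: "continuous_on ({a..b} \<times> {c..d}) g"
    and f_left: "\<And>y. y \<in> {c..d} \<Longrightarrow> 0 \<le> f (a, y)"
    and f_right: "\<And>y. y \<in> {c..d} \<Longrightarrow> f (b, y) \<le> 0"
    and g_bottom: "\<And>x. x \<in> {a..b} \<Longrightarrow> 0 \<le> g (x, c)"
    and g_top: "\<And>x. x \<in> {a..b} \<Longrightarrow> g (x, d) \<le> 0"
  obtains x y where "x \<in> {a..b}" "y \<in> {c..d}" "f (x, y) = 0" "g (x, y) = 0"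
proof -
  define S where "S = {a..b} \<times> {c..d}"
  define T where "T = (\<lambda>p. (max a (min b (fst p + f p)), max c (min d (snd p + g p))))"
  have "continuous_on S T"
    unfolding T_def S_def by (intro continuous_intros contf contg)
  moreover have "T \<in> S \<rightarrow> S"
    unfolding T_def S_def using assms(1,2) by auto
  moreover have "compact S" "convex S" "S \<noteq> {}"
    unfolding S_def using assms(1,2) by (auto intro!: compact_Times convex_Times)
  ultimately obtain x y where xy: "(x, y) \<in> S" "T (x, y) = (x, y)"
    using brouwer by (metis surj_pair)
  have "f (x, y) = 0"
    by (rule clamp_fixed_point_eq_zero[of a x b]) (use xy f_left f_right in \<open>auto simp: S_def T_def\<close>)
  moreover have "g (x, y) = 0"
    by (rule clamp_fixed_point_eq_zero[of c y d]) (use xy g_bottom g_top in \<open>auto simp: S_def T_def\<close>)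
  ultimately show thesis
    using that xy(1) unfolding S_def by blast
qed

lemma has_integral_deriv_one_minus_square_mult:
  fixes P P' :: "real \<Rightarrow> real"
  assumes "\<And>z. z \<in> {-1..1} \<Longrightarrow> (P has_real_derivative P' z) (at z within {-1..1})"
  shows "((\<lambda>z. (1 - z\<^sup>2) * P' z - 2 * z * P z) has_integral 0) {-1..1}"
proof -
  have "((\<lambda>z. (1 - z\<^sup>2) * P' z - 2 * z * P z) has_integral
          (1 - 1\<^sup>2) * P 1 - (1 - (-1)\<^sup>2) * P (-1)) {-1..1}"
  proof (rule fundamental_theorem_of_calculus)
    fix z :: real assume "z \<in> {-1..1}"
    then show "((\<lambda>z. (1 - z\<^sup>2) * P z) has_vector_derivative (1 - z\<^sup>2) * P' z - 2 * z * P z)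
                 (at z within {-1..1})"
      unfolding has_real_derivative_iff_has_vector_derivative[symmetric]
      by (auto intro!: derivative_eq_intros assms)
  qed simp
  then show ?thesis by simp
qed

lemma integral_by_parts_one_minus_square:
  fixes P P' :: "real \<Rightarrow> real"
  assumes deriv: "\<And>z. z \<in> {-1..1} \<Longrightarrow> (P has_real_derivative P' z) (at z within {-1..1})"
    and contP': "continuous_on {-1..1} P'"
  shows "integral {-1..1} (\<lambda>z. P z * (A * (1 - z\<^sup>2) + B * z)) =
         integral {-1..1} (\<lambda>z. (1 - z\<^sup>2) * (A * P z + B / 2 * P' z))"
proof -
  have "continuous_on {-1..1} P"
    using deriv by (rule DERIV_continuous_on)
  then have "((\<lambda>z. P z * (A * (1 - z\<^sup>2) + B * z)) has_integral
               integral {-1..1} (\<lambda>z. P z * (A * (1 - z\<^sup>2) + B * z))) {-1..1}"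
    by (intro integrable_integral integrable_continuous_interval continuous_intros)
  from has_integral_add[OF this has_integral_mult_right[OF
        has_integral_deriv_one_minus_square_mult[OF deriv], of "B / 2"]]
  have "((\<lambda>z. P z * (A * (1 - z\<^sup>2) + B * z) + B / 2 * ((1 - z\<^sup>2) * P' z - 2 * z * P z))
          has_integral integral {-1..1} (\<lambda>z. P z * (A * (1 - z\<^sup>2) + B * z))) {-1..1}"
    by simp
  moreover have "(\<lambda>z. P z * (A * (1 - z\<^sup>2) + B * z) + B / 2 * ((1 - z\<^sup>2) * P' z - 2 * z * P z)) =
                 (\<lambda>z. (1 - z\<^sup>2) * (A * P z + B / 2 * P' z))"
    by (simp add: fun_eq_iff field_simps)
  ultimately show ?thesis by (simp add: integral_unique)
qed

lemma has_real_derivative_power_product: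
  fixes x1 x2 :: real
  assumes "1 \<le> d1" "1 \<le> d2"
  shows "((\<lambda>z. (1 + x1 * z) ^ d1 * (1 + x2 * z) ^ d2) has_real_derivative
           (1 + x1 * z) ^ (d1 - 1) * (1 + x2 * z) ^ (d2 - 1) *
           (d1 * x1 * (1 + x2 * z) + d2 * x2 * (1 + x1 * z))) (at z within S)"
proof -
  obtain k1 k2 where d: "d1 = Suc k1" "d2 = Suc k2"
    using assms by (metis Suc_le_D One_nat_def)
  have "((\<lambda>z. (1 + x1 * z) ^ d1 * (1 + x2 * z) ^ d2) has_real_derivative
           d1 * (1 + x1 * z) ^ (d1 - 1) * x1 * (1 + x2 * z) ^ d2 +
           (1 + x1 * z) ^ d1 * (d2 * (1 + x2 * z) ^ (d2 - 1) * x2)) (at z within S)"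
    by (rule derivative_eq_intros refl | simp)+
  then show ?thesis
    by (simp add: d algebra_simps)
qed

lemma h_fun_by_parts:
  assumes "1 \<le> d1" "1 \<le> d2"
  shows "h_fun d1 d2 xa sa x1 x2 = integral {-1..1} (\<lambda>z.
           (1 - z\<^sup>2) * (1 + x1 * z) ^ (d1 - 1) * (1 + x2 * z) ^ (d2 - 1) *
           (xa * (xa * sa - 1) * (1 + x1 * z) * (1 + x2 * z) +
            (1 - xa\<^sup>2) / 2 * (d1 * x1 * (1 + x2 * z) + d2 * x2 * (1 + x1 * z))))"
proof -
  obtain k1 k2 where d: "d1 = Suc k1" "d2 = Suc k2"
    using assms by (metis Suc_le_D One_nat_def)
  have "h_fun d1 d2 xa sa x1 x2 = integral {-1..1} (\<lambda>z. (1 + x1 * z) ^ d1 * (1 + x2 * z) ^ d2 *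
          (xa * (xa * sa - 1) * (1 - z\<^sup>2) + (1 - xa\<^sup>2) * z))"
    unfolding h_fun_def by (simp add: mult.commute)
  also have "\<dots> = integral {-1..1} (\<lambda>z. (1 - z\<^sup>2) *
           (xa * (xa * sa - 1) * ((1 + x1 * z) ^ d1 * (1 + x2 * z) ^ d2) + (1 - xa\<^sup>2) / 2 *
            ((1 + x1 * z) ^ (d1 - 1) * (1 + x2 * z) ^ (d2 - 1) *
             (d1 * x1 * (1 + x2 * z) + d2 * x2 * (1 + x1 * z)))))"
    by (intro integral_by_parts_one_minus_square has_real_derivative_power_product assms)
       (auto intro!: continuous_intros)
  also have "\<dots> = integral {-1..1} (\<lambda>z.
           (1 - z\<^sup>2) * (1 + x1 * z) ^ (d1 - 1) * (1 + x2 * z) ^ (d2 - 1) *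
           (xa * (xa * sa - 1) * (1 + x1 * z) * (1 + x2 * z) +
            (1 - xa\<^sup>2) / 2 * (d1 * x1 * (1 + x2 * z) + d2 * x2 * (1 + x1 * z))))"
    by (rule integral_cong) (simp add: d; algebra)
  finally show ?thesis .
qed

lemma h_fun_swap: "h_fun d1 d2 xa sa x1 x2 = h_fun d2 d1 xa sa x2 x1"
  unfolding h_fun_def by (simp add: mult_ac)

lemma continuous_on_h_fun [continuous_intros]:
  fixes xa x1 x2 :: "'a::topological_space \<Rightarrow> real"
  assumes "continuous_on U xa" "continuous_on U x1" "continuous_on U x2"
  shows "continuous_on U (\<lambda>p. h_fun d1 d2 (xa p) s (x1 p) (x2 p))"
proof -
  have "continuous_on (U \<times> cbox (-1) 1) (\<lambda>(p, z::real). (1 + x1 p * z) ^ d1 * (1 + x2 p * z) ^ d2 *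
          (xa p * (xa p * s - 1) * (1 - z\<^sup>2) + z * (1 - (xa p)\<^sup>2)))"
    unfolding case_prod_beta
    by (intro continuous_intros continuous_on_compose2[OF assms(1), of _ fst]
          continuous_on_compose2[OF assms(2), of _ fst] continuous_on_compose2[OF assms(3), of _ fst]) auto
  from integral_continuous_on_param[OF this] show ?thesis
    unfolding h_fun_def by simp
qed

lemma min_one_plus_le_one_plus_mult:
  fixes c z :: real
  assumes "0 \<le> c" "c \<le> 1"
  shows "min 1 (1 + z) \<le> 1 + c * z"
proof (cases "0 \<le> z")
  case True
  then show ?thesis using assms(1) by simp
next
  case False
  then have "1 * z \<le> c * z"
    using assms(2) by (intro mult_right_mono_neg) auto
  then show ?thesis by simp
qed

lemma lower_edge_factor_nonneg:
  fixes e x z s D1 D2 :: real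
  assumes "0 < e" "e \<le> x" "x \<le> 1" "-1 \<le> z" "z \<le> 1"
    and "0 \<le> D1" "0 \<le> D2" "3 \<le> D1 + D2"
    and "s < 1" "e * (3 - 2 * s) \<le> 1"
  shows "0 \<le> e * (e * s - 1) * (1 + e * z) * (1 + x * z) +
              (1 - e\<^sup>2) / 2 * (D1 * e * (1 + x * z) + D2 * x * (1 + e * z))"
proof -
  define u where "u = 1 + e * z"
  define v where "v = 1 + x * z"
  have "e * 1 < e * (3 - 2 * s)"
    using assms(1,9) by (intro mult_strict_left_mono) auto
  then have "e < 1"
    using assms(10) by linarith
  have "0 \<le> u" "0 \<le> v"
    unfolding u_def v_def
    using min_one_plus_le_one_plus_mult[of e z] min_one_plus_le_one_plus_mult[of x z] assms(1-4) \<open>e < 1\<close>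
    by auto
  have "u \<le> 1 + e"
    unfolding u_def using assms(1,5) by (simp add: mult_left_le)
  have "e * v \<le> x * u"
    unfolding u_def v_def using assms(2) by (simp add: algebra_simps)
  then have "(D1 + D2) * (e * v) \<le> D1 * e * v + D2 * x * u"
    using assms(7) by (simp add: algebra_simps mult_left_mono)
  moreover have "3 * (e * v) \<le> (D1 + D2) * (e * v)"
    using assms(1,8) \<open>0 \<le> v\<close> by (intro mult_right_mono) auto
  moreover have "0 \<le> 1 - e\<^sup>2"
    using assms(1) \<open>e < 1\<close> by (simp add: power_le_one)
  ultimately have bound1:
    "(1 - e\<^sup>2) / 2 * (3 * (e * v)) \<le> (1 - e\<^sup>2) / 2 * (D1 * e * v + D2 * x * u)"
    by (intro mult_left_mono) auto
  have "e * s \<le> e"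
    using assms(1,9) by (simp add: mult_left_le)
  then have "0 \<le> 1 - e * s"
    using \<open>e < 1\<close> by linarith
  then have "0 \<le> e * (1 - e * s)"
    using assms(1) by simp
  with mult_right_mono[OF \<open>u \<le> 1 + e\<close> \<open>0 \<le> v\<close>] have "e * (1 - e * s) * (u * v) \<le> e * (1 - e * s) * ((1 + e) * v)"
    by (rule mult_left_mono)
  moreover have "e * (e * s - 1) * u * v = - (e * (1 - e * s) * (u * v))"
    by (simp add: algebra_simps)
  ultimately have bound2: "- (e * (1 - e * s) * ((1 + e) * v)) \<le> e * (e * s - 1) * u * v"
    by linarith
  have "(1 - e\<^sup>2) / 2 * (3 * (e * v)) - e * (1 - e * s) * ((1 + e) * v) =
        e * v * (1 + e) * (1 - e * (3 - 2 * s)) / 2"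
    by (simp add: field_simps power2_eq_square)
  also have "\<dots> \<ge> 0"
    using assms(1,10) \<open>0 \<le> v\<close> by simp
  finally show ?thesis
    using bound1 bound2 unfolding u_def[symmetric] v_def[symmetric] by linarith
qed

lemma h_fun_lower_edge_nonneg:
  assumes "1 \<le> d1" "1 \<le> d2" "3 \<le> d1 + d2"
    and "0 < e" "e \<le> x2" "x2 \<le> 1" "s < 1" "e * (3 - 2 * s) \<le> 1"
  shows "0 \<le> h_fun d1 d2 e s e x2"
  unfolding h_fun_by_parts[OF assms(1,2)]
proof (rule integral_nonneg)
  fix z :: real
  assume z: "z \<in> {-1..1}"
  have "e \<le> 1"
    using assms(5,6) by linarith
  have "0 \<le> 1 - z\<^sup>2" "0 \<le> 1 + e * z" "0 \<le> 1 + x2 * z"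
    using z assms(4-6) \<open>e \<le> 1\<close> min_one_plus_le_one_plus_mult[of e z]
      min_one_plus_le_one_plus_mult[of x2 z]
    by (auto simp: abs_square_le_1)
  moreover have "0 \<le> e * (e * s - 1) * (1 + e * z) * (1 + x2 * z) +
              (1 - e\<^sup>2) / 2 * (d1 * e * (1 + x2 * z) + d2 * x2 * (1 + e * z))"
    using assms z by (intro lower_edge_factor_nonneg) auto
  ultimately show "0 \<le> (1 - z\<^sup>2) * (1 + e * z) ^ (d1 - 1) * (1 + x2 * z) ^ (d2 - 1) *
           (e * (e * s - 1) * (1 + e * z) * (1 + x2 * z) +
            (1 - e\<^sup>2) / 2 * (d1 * e * (1 + x2 * z) + d2 * x2 * (1 + e * z)))"
    by (intro mult_nonneg_nonneg zero_le_power)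
qed (intro integrable_continuous_interval continuous_intros)

lemma h_fun_upper_edge_neg:
  assumes "s < 1" "0 \<le> x2" "x2 \<le> 1"
  shows "h_fun d1 d2 1 s 1 x2 < 0"
proof -
  have "integral {-1..1} (\<lambda>z. (1 + 1 * z) ^ d1 * (1 + x2 * z) ^ d2 *
          (1 * (1 * s - 1) * (1 - z\<^sup>2) + z * (1 - 1\<^sup>2))) < integral {-1..1} (\<lambda>z::real. 0)"
  proof (rule integral_less_real)
    fix z :: real
    assume "z \<in> {-1<..<1}"
    then have "0 < 1 + z" "0 < 1 - z\<^sup>2" "0 < 1 + x2 * z"
      using assms(2,3) min_one_plus_le_one_plus_mult[of x2 z]
      by (auto simp: abs_square_less_1)
    moreover from this(2) have "(s - 1) * (1 - z\<^sup>2) < 0"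
      using assms(1) by (simp add: mult_neg_pos)
    ultimately show "(1 + 1 * z) ^ d1 * (1 + x2 * z) ^ d2 * (1 * (1 * s - 1) * (1 - z\<^sup>2) + z * (1 - 1\<^sup>2)) < 0"
      by (simp add: mult_pos_neg)
  qed (auto intro!: continuous_intros)
  then show ?thesis
    unfolding h_fun_def by simp
qed

lemma common_edge_parameter:
  fixes s1 s2 :: real
  assumes "s1 < 1" "s2 < 1"
  obtains e where "0 < e" "e \<le> 1" "e * (3 - 2 * s1) \<le> 1" "e * (3 - 2 * s2) \<le> 1"
proof -
  define e where "e = 1 / (3 - 2 * min s1 s2)"
  have "1 < 3 - 2 * min s1 s2"
    using assms by (simp add: min_def)
  then have "0 < e" "e \<le> 1"
    unfolding e_def by simp_all
  have "e * (3 - 2 * s) \<le> 1" if "min s1 s2 \<le> s" for s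
  proof -
    have "e * (3 - 2 * s) \<le> e * (3 - 2 * min s1 s2)"
      using that \<open>0 < e\<close> by (intro mult_left_mono) auto
    also have "\<dots> = 1"
      unfolding e_def using \<open>1 < 3 - 2 * min s1 s2\<close> by simp
    finally show ?thesis .
  qed
  then show thesis
    using that \<open>0 < e\<close> \<open>e \<le> 1\<close> by simp
qed

theorem lemma3p6:
  fixes d1 d2 :: nat and s1 s2 :: real
  assumes "d1 \<ge> 1" and "d2 \<ge> 1" and "\<not> (d1 = 1 \<and> d2 = 1)"
    and "s1 < 1" and "s2 < 1"
  shows "\<exists>x1 x2. x1 \<in> {0<..<1} \<and> x2 \<in> {0<..<1} \<and>
           h_fun d1 d2 x1 s1 x1 x2 = 0 \<and> h_fun d1 d2 x2 s2 x1 x2 = 0"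
proof -
  obtain e where e: "0 < e" "e \<le> 1" "e * (3 - 2 * s1) \<le> 1" "e * (3 - 2 * s2) \<le> 1"
    using common_edge_parameter[OF assms(4,5)] by blast
  have "3 \<le> d1 + d2"
    using assms(1-3) by linarith
  obtain x1 x2 where x: "x1 \<in> {e..1}" "x2 \<in> {e..1}"
    and zero: "h_fun d1 d2 x1 s1 x1 x2 = 0" "h_fun d1 d2 x2 s2 x1 x2 = 0"
  proof (rule poincare_miranda_2[of e 1 e 1 "\<lambda>(x1, x2). h_fun d1 d2 x1 s1 x1 x2"
                                          "\<lambda>(x1, x2). h_fun d1 d2 x2 s2 x1 x2"])
    show "continuous_on ({e..1} \<times> {e..1}) (\<lambda>(x1, x2). h_fun d1 d2 x1 s1 x1 x2)"
      "continuous_on ({e..1} \<times> {e..1}) (\<lambda>(x1, x2). h_fun d1 d2 x2 s2 x1 x2)"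
      unfolding case_prod_beta by (intro continuous_intros)+
  qed (use assms e \<open>3 \<le> d1 + d2\<close> in
         \<open>auto intro: h_fun_lower_edge_nonneg less_imp_le[OF h_fun_upper_edge_neg]
               simp: h_fun_swap[of d1 d2 _ _ _ e] h_fun_swap[of d1 d2 _ _ _ 1] add.commute\<close>)
  have "x1 \<noteq> 1"
    using zero(1) x(2) e(1) h_fun_upper_edge_neg[OF assms(4), of x2 d1 d2] by auto
  moreover have "x2 \<noteq> 1"
    using zero(2) x(1) e(1) h_fun_upper_edge_neg[OF assms(5), of x1 d2 d1]
    by (auto simp: h_fun_swap[of d1 d2 _ _ x1])
  ultimately show ?thesis
    using x zero e(1) by (intro exI[of _ x1] exI[of _ x2]) auto
qed

end
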